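(* Let $p$ be an odd prime and let $\mathcal{L}=(L_1,\dots,L_m)$ be a system of linear forms in $d$ variables with coefficients in $\mathbb{F}_p$, written $L_i(x_1,\dots,x_d)=\sum_{r=1}^d\gamma^{(i)}_r x_r$. Suppose that the $d\times d$ matrices $\Gamma^{(i)}=(\gamma^{(i)}_r\gamma^{(i)}_s)_{r,s=1}^d$, $i=1,\dots,m$, are linearly dependent over $\mathbb{F}_p$ (i.e. the quadratic forms $L_i^TL_i$ are linearly dependent). Then there exists $\epsilon>0$ such that for every $\delta>0$ there exist $n$ and a set $A\subset\mathbb{F}_p^n$, of density $\alpha=|A|/p^n$, with the following two properties: (i) the balanced function $f=1_A-\alpha$ satisfies $\|f\|_{U^2}\le\delta$; (ii) if $\mathbf{x}=(x_1,\dots,x_d)$ is chosen uniformly at random from $(\mathbb{F}_p^n)^d$, then the probability that $L_i(\mathbf{x})\in A$ for every $i=1,\dots,m$ is at least $\alpha^m+\epsilon$.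
   Context: For $\mathbf{x}=(x_1,\dots,x_d)\in(\mathbb{F}_p^n)^d$, $L_i(\mathbf{x})=\sum_r\gamma^{(i)}_r x_r\in\mathbb{F}_p^n$. For $f:\mathbb{F}_p^n\to\mathbb{C}$, the $U^2$-norm is defined by $\|f\|_{U^2}^4=\mathbb{E}_{x,h_1,h_2\in\mathbb{F}_p^n}f(x)\overline{f(x+h_1)}\,\overline{f(x+h_2)}f(x+h_1+h_2)$, expectations being uniform averages. $1_A$ denotes the characteristic function of $A$. *)

theory Defs
  imports "HOL-Analysis.Analysis"
begin

text \<open>The field F_p is modelled by a finite field type 'a with CARD('a) = p (p prime).
  A vector of F_p^n is a function nat => 'a vanishing outside {..<n}.\<close>

definition vecs :: "nat \<Rightarrow> (nat \<Rightarrow> 'a::zero) set" where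
  "vecs n = {x. \<forall>j\<ge>n. x j = 0}"

definition linform :: "nat \<Rightarrow> (nat \<Rightarrow> nat \<Rightarrow> 'a::comm_ring) \<Rightarrow> nat \<Rightarrow> (nat \<Rightarrow> nat \<Rightarrow> 'a) \<Rightarrow> (nat \<Rightarrow> 'a)" where
  "linform d gam i xs = (\<lambda>j. \<Sum>r<d. gam i r * xs r j)"

definition quad_forms_dependent :: "nat \<Rightarrow> nat \<Rightarrow> (nat \<Rightarrow> nat \<Rightarrow> 'a::comm_ring) \<Rightarrow> bool" where
  "quad_forms_dependent m d gam \<longleftrightarrow>
     (\<exists>c :: nat \<Rightarrow> 'a. (\<exists>i<m. c i \<noteq> 0) \<and>
        (\<forall>r<d. \<forall>s<d. (\<Sum>i<m. c i * (gam i r * gam i s)) = 0))"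

definition vadd :: "(nat \<Rightarrow> 'a::plus) \<Rightarrow> (nat \<Rightarrow> 'a) \<Rightarrow> (nat \<Rightarrow> 'a)" where
  "vadd x y = (\<lambda>j. x j + y j)"

definition U2_pow4 :: "nat \<Rightarrow> ((nat \<Rightarrow> 'a::{finite,comm_ring}) \<Rightarrow> complex) \<Rightarrow> complex" where
  "U2_pow4 n f = (\<Sum>x\<in>vecs n. \<Sum>h1\<in>vecs n. \<Sum>h2\<in>vecs n.
      f x * cnj (f (vadd x h1)) * cnj (f (vadd x h2)) * f (vadd (vadd x h1) h2)) / of_nat (card (vecs n :: (nat \<Rightarrow> 'a) set) ^ 3)"

definition U2_norm :: "nat \<Rightarrow> ((nat \<Rightarrow> 'a::{finite,comm_ring}) \<Rightarrow> complex) \<Rightarrow> real" where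
  "U2_norm n f = root 4 (Re (U2_pow4 n f))"

end

(* The witness is the zero set A of the hyperbolic quadratic form Q(y) = \<Sum>_{j<k} y_{2j} y_{2j+1}
   on F_p^{2k}.  With a nontrivial additive character \<psi>, 1[Q(y) = 0] = p^{-1} \<Sum>_t \<psi>(t Q(y)), so any
   sum over x of a product of functions of Q(L_i(x)) becomes a sum over a \<in> F_p^m of terms
   (p^d |ker \<Sum>_i a_i \<Gamma>^(i)|)^k: the form \<Sum>_i a_i Q(L_i(x)) is bilinear in pairs of coordinates and
   splits over the k hyperbolic pairs.
   For the U2 norm take the forms x, x+h1, x+h2, x+h1+h2; their Gram matrices are independent, so
   every term with a \<noteq> 0 is smaller by a factor p^{-k} than the trivial one and the U2 norm of
   1_A - \<alpha> tends to 0, while \<alpha> tends to 1/p.  For the given system, the p combinations a on the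
   line through the linear dependency give maximal terms, so the probability that all L_i(x) lie
   in A is at least p^{1-m}, exceeding \<alpha>^m \<approx> p^{-m} by a margin independent of k since p \<ge> 3. *)

theory Submission
  imports Defs "HOL-Number_Theory.Residues" "HOL-Probability.Product_PMF"
begin

section \<open>Additive characters\<close>

locale additive_character =
  fixes \<psi> :: "'a::{field,finite} \<Rightarrow> complex"
  assumes character_add: "\<psi> (a + b) = \<psi> a * \<psi> b"
    and character_zero [simp]: "\<psi> 0 = 1"
    and character_nontrivial: "\<exists>c. \<psi> c \<noteq> 1"
begin

lemma character_sum: "finite S \<Longrightarrow> \<psi> (\<Sum>i\<in>S. f i) = (\<Prod>i\<in>S. \<psi> (f i))"
  by (induction S rule: finite_induct) (simp_all add: character_add)

text \<open>Translating by \<open>c\<close> with \<open>\<psi> c \<noteq> 1\<close> multiplies the full sum by \<open>\<psi> c\<close>, so it vanishes.\<close>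
lemma sum_character_mult: "(\<Sum>t\<in>UNIV. \<psi> (s * t)) = of_nat CARD('a) * of_bool (s = 0)"
proof (cases "s = 0")
  case False
  obtain c where c: "\<psi> c \<noteq> 1" using character_nontrivial by blast
  have "(\<Sum>t\<in>UNIV. \<psi> t) = (\<Sum>t\<in>UNIV. \<psi> (t + c))"
    by (rule sum.reindex_bij_witness[of _ "\<lambda>t. t + c" "\<lambda>t. t - c"]) auto
  also have "\<dots> = \<psi> c * (\<Sum>t\<in>UNIV. \<psi> t)"
    by (simp add: character_add sum_distrib_left mult.commute)
  finally have "(\<Sum>t\<in>UNIV. \<psi> t) = 0"
    using c by (metis mult_cancel_right1 mult.commute)
  moreover have "(\<Sum>t\<in>UNIV. \<psi> (s * t)) = (\<Sum>t\<in>UNIV. \<psi> t)"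
    by (rule sum.reindex_bij_witness[of _ "\<lambda>t. t / s" "\<lambda>t. s * t"]) (use False in auto)
  ultimately show ?thesis using False by simp
qed simp

end

lemma CHAR_eq_CARD_if_prime:
  assumes "prime CARD('a::{field,finite})"
  shows "CHAR('a) = CARD('a)"
  using CHAR_dvd_CARD[where 'a='a] CHAR_not_1'[where 'a='a] assms
  by (auto simp: prime_nat_iff)

lemma of_nat_surj_if_prime_card:
  assumes "prime CARD('a::{field,finite})"
  shows "\<exists>j. of_nat j = (a::'a)"
proof -
  have "inj_on (of_nat :: nat \<Rightarrow> 'a) {..<CARD('a)}"
    using of_nat_eq_iff_cong_CHAR[where 'a='a] CHAR_eq_CARD_if_prime[OF assms]
    by (auto simp: inj_on_def cong_def)
  then have "card ((of_nat :: nat \<Rightarrow> 'a) ` {..<CARD('a)}) = CARD('a)"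
    by (simp add: card_image)
  then have "(of_nat :: nat \<Rightarrow> 'a) ` {..<CARD('a)} = UNIV"
    by (simp add: card_subset_eq)
  then show ?thesis by (metis UNIV_I imageE)
qed

text \<open>For \<open>p\<close> prime, \<open>\<psi> (of_nat j) = exp (2 \<pi> i j / p)\<close> is well defined.\<close>
lemma additive_character_exists:
  assumes prime: "prime CARD('a::{field,finite})"
  shows "\<exists>\<psi>::'a \<Rightarrow> complex. additive_character \<psi>"
proof -
  define p where "p = CARD('a)"
  have p: "1 \<le> p" "p \<noteq> 1" using prime prime_gt_1_nat p_def by auto
  define e where "e j = exp (2 * of_real pi * \<i> * of_nat j / of_nat p)" for j :: nat
  define \<psi> where "\<psi> a = e (SOME j. of_nat j = a)" for a :: 'a
  have \<psi>_of_nat: "\<psi> (of_nat j) = e j" for j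
  proof -
    have "of_nat (SOME k. of_nat k = (of_nat j :: 'a)) = (of_nat j :: 'a)"
      by (rule someI) (rule refl)
    then have "(SOME k. of_nat k = (of_nat j :: 'a)) mod p = j mod p"
      using of_nat_eq_iff_cong_CHAR[where 'a='a] CHAR_eq_CARD_if_prime[OF prime]
      by (simp add: cong_def p_def)
    then show ?thesis
      unfolding \<psi>_def e_def using complex_root_unity_eq[OF p(1)] by blast
  qed
  have e_add: "e (j + k) = e j * e k" for j k
    unfolding e_def by (simp add: distrib_left add_divide_distrib exp_add)
  have "additive_character \<psi>"
  proof
    fix a b :: 'a
    obtain j k where "a = of_nat j" "b = of_nat k"
      using of_nat_surj_if_prime_card[OF prime] by metis
    then show "\<psi> (a + b) = \<psi> a * \<psi> b"
      by (metis \<psi>_of_nat e_add of_nat_add)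
  next
    show "\<psi> 0 = 1" using \<psi>_of_nat[of 0] by (simp add: e_def)
  next
    have "\<psi> 1 \<noteq> 1"
      using \<psi>_of_nat[of 1] complex_root_unity_eq_1[OF p(1), of 1] p(2)
      by (simp add: e_def)
    then show "\<exists>c. \<psi> c \<noteq> 1" by blast
  qed
  then show ?thesis by blast
qed

section \<open>Bilinear forms and their left kernels\<close>

definition bilinear_form :: "nat set \<Rightarrow> (nat \<Rightarrow> nat \<Rightarrow> 'a::comm_ring) \<Rightarrow> (nat \<Rightarrow> 'a) \<Rightarrow> (nat \<Rightarrow> 'a) \<Rightarrow> 'a" where
  "bilinear_form I M u v = (\<Sum>r\<in>I. \<Sum>s\<in>I. M r s * u r * v s)"

definition left_kernel :: "nat set \<Rightarrow> (nat \<Rightarrow> nat \<Rightarrow> 'a::comm_ring) \<Rightarrow> (nat \<Rightarrow> 'a) set" where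
  "left_kernel I M = {u \<in> PiE I (\<lambda>_. UNIV). \<forall>s\<in>I. (\<Sum>r\<in>I. u r * M r s) = 0}"

lemma bilinear_form_eq_sum_left: "bilinear_form I M u v = (\<Sum>s\<in>I. (\<Sum>r\<in>I. u r * M r s) * v s)"
  unfolding bilinear_form_def
  by (subst sum.swap) (simp add: sum_distrib_left sum_distrib_right mult_ac)

lemma prod_of_bool: "finite I \<Longrightarrow> (\<Prod>i\<in>I. of_bool (P i)) = (of_bool (\<forall>i\<in>I. P i) :: 'b::comm_semiring_1)"
  by (induction I rule: finite_induct) auto

context additive_character
begin

lemma sum_character_bilinear_form:
  assumes "finite I"
  shows "(\<Sum>u\<in>PiE I (\<lambda>_. UNIV). \<Sum>v\<in>PiE I (\<lambda>_. UNIV). \<psi> (bilinear_form I M u v))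
     = of_nat (CARD('a) ^ card I * card (left_kernel I M))"
proof -
  have inner: "(\<Sum>v\<in>PiE I (\<lambda>_. UNIV). \<psi> (bilinear_form I M u v))
     = of_nat (CARD('a) ^ card I) * of_bool (u \<in> left_kernel I M)" if u: "u \<in> PiE I (\<lambda>_. UNIV)" for u
  proof -
    have "(\<Sum>v\<in>PiE I (\<lambda>_. UNIV). \<psi> (bilinear_form I M u v))
        = (\<Sum>v\<in>PiE I (\<lambda>_. UNIV). \<Prod>s\<in>I. \<psi> ((\<Sum>r\<in>I. u r * M r s) * v s))"
      by (simp add: bilinear_form_eq_sum_left character_sum[OF assms])
    also have "\<dots> = (\<Prod>s\<in>I. \<Sum>t\<in>UNIV. \<psi> ((\<Sum>r\<in>I. u r * M r s) * t))"
      by (rule prod_sum_PiE[symmetric]) (use assms in auto)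
    also have "\<dots> = of_nat (CARD('a) ^ card I) * of_bool (u \<in> left_kernel I M)"
      using u by (simp add: sum_character_mult prod.distrib prod_of_bool[OF assms] left_kernel_def)
    finally show ?thesis .
  qed
  have "left_kernel I M \<subseteq> PiE I (\<lambda>_. UNIV)"
    by (auto simp: left_kernel_def)
  then show ?thesis
    using assms by (simp add: inner sum_distrib_left[symmetric] Int_absorb1 finite_PiE flip: Int_def)
qed

end

lemma card_left_kernel_zero:
  assumes "finite I" "\<forall>r\<in>I. \<forall>s\<in>I. M r s = 0"
  shows "card (left_kernel I (M :: nat \<Rightarrow> nat \<Rightarrow> 'a::{field,finite})) = CARD('a) ^ card I"
  using assms by (simp add: left_kernel_def card_PiE)

text \<open>A nonzero entry \<open>M r\<^sub>0 s\<^sub>0\<close> lets column \<open>s\<^sub>0\<close> determine \<open>u r\<^sub>0\<close> from the other coordinates.\<close>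
lemma card_left_kernel_le:
  assumes fin: "finite I" and r0: "r0 \<in> I" and s0: "s0 \<in> I" and nz: "M r0 s0 \<noteq> 0"
  shows "card (left_kernel I (M :: nat \<Rightarrow> nat \<Rightarrow> 'a::{field,finite})) \<le> CARD('a) ^ (card I - 1)"
proof -
  have inj: "inj_on (\<lambda>u. restrict u (I - {r0})) (left_kernel I M)"
  proof (rule inj_onI)
    fix u u' assume u: "u \<in> left_kernel I M" and u': "u' \<in> left_kernel I M"
      and eq: "restrict u (I - {r0}) = restrict u' (I - {r0})"
    have off: "u r = u' r" if "r \<in> I - {r0}" for r
      using fun_cong[OF eq, of r] that by simp
    have split: "(\<Sum>r\<in>I. w r * M r s0) = w r0 * M r0 s0 + (\<Sum>r\<in>I - {r0}. w r * M r s0)" for w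
      using fin r0 by (rule sum.remove)
    have "u r0 * M r0 s0 + (\<Sum>r\<in>I - {r0}. u r * M r s0) = u' r0 * M r0 s0 + (\<Sum>r\<in>I - {r0}. u' r * M r s0)"
      using u u' s0 by (simp add: left_kernel_def flip: split)
    moreover have "(\<Sum>r\<in>I - {r0}. u r * M r s0) = (\<Sum>r\<in>I - {r0}. u' r * M r s0)"
      using off by (intro sum.cong) auto
    ultimately have "u r0 = u' r0" using nz by simp
    with off u u' show "u = u'"
      by (auto simp: left_kernel_def fun_eq_iff PiE_iff extensional_def) metis
  qed
  moreover have "(\<lambda>u. restrict u (I - {r0})) ` left_kernel I M \<subseteq> PiE (I - {r0}) (\<lambda>_. UNIV)"
    by (intro image_subsetI, subst restrict_PiE_iff) simp
  ultimately have "card (left_kernel I M) \<le> card (PiE (I - {r0}) (\<lambda>_. UNIV :: 'a set))"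
    using fin by (intro card_inj_on_le) (auto intro: finite_PiE)
  also have "\<dots> = CARD('a) ^ (card I - 1)"
    using fin r0 by (simp add: card_PiE)
  finally show ?thesis .
qed

lemma card_left_kernel_pos:
  assumes "finite I"
  shows "0 < card (left_kernel I (M :: nat \<Rightarrow> nat \<Rightarrow> 'a::{field,finite}))"
proof -
  have "(\<lambda>r\<in>I. 0) \<in> left_kernel I M" by (simp add: left_kernel_def)
  moreover have "finite (left_kernel I M)"
    by (rule finite_subset[of _ "PiE I (\<lambda>_. UNIV)"]) (auto simp: left_kernel_def intro: finite_PiE assms)
  ultimately show ?thesis by (auto simp: card_gt_0_iff)
qed

lemma card_left_kernel_1x1:
  "card (left_kernel {..<1} (\<lambda>_ _. t :: 'a::{field,finite})) = (if t = 0 then CARD('a) else 1)"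
  using card_left_kernel_zero[of "{..<1}" "\<lambda>_ _. t"] card_left_kernel_le[of "{..<1}" 0 0 "\<lambda>_ _. t"]
    card_left_kernel_pos[of "{..<1}" "\<lambda>_ _. t"]
  by auto

lemma vecs_eq_PiE_dflt: "vecs n = PiE_dflt {..<n} 0 (\<lambda>_. UNIV)"
  by (auto simp: vecs_def PiE_dflt_def)

lemma finite_vecs [simp]: "finite (vecs n :: (nat \<Rightarrow> 'a::{zero,finite}) set)"
  by (auto simp: vecs_eq_PiE_dflt)

lemma card_vecs: "card (vecs n :: (nat \<Rightarrow> 'a::{zero,finite}) set) = CARD('a) ^ n"
  by (simp add: vecs_eq_PiE_dflt card_PiE_dflt)

lemma sum_PiE_vecs_Suc:
  assumes "finite I"
  shows "(\<Sum>xs\<in>PiE I (\<lambda>_. vecs (Suc n)). F xs)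
     = (\<Sum>ys\<in>PiE I (\<lambda>_. vecs n). \<Sum>u\<in>PiE I (\<lambda>_. UNIV). F (\<lambda>r\<in>I. (ys r)(n := u r)))"
proof -
  have "(\<Sum>ys\<in>PiE I (\<lambda>_. vecs n). \<Sum>u\<in>PiE I (\<lambda>_. UNIV). F (\<lambda>r\<in>I. (ys r)(n := u r)))
      = (\<Sum>(ys, u)\<in>PiE I (\<lambda>_. vecs n) \<times> PiE I (\<lambda>_. UNIV). F (\<lambda>r\<in>I. (ys r)(n := u r)))"
    by (rule sum.cartesian_product)
  also have "\<dots> = (\<Sum>xs\<in>PiE I (\<lambda>_. vecs (Suc n)). F xs)"
    by (rule sum.reindex_bij_witness[of _ "\<lambda>xs. (\<lambda>r\<in>I. (xs r)(n := 0), \<lambda>r\<in>I. xs r n)"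
        "\<lambda>(ys, u). \<lambda>r\<in>I. (ys r)(n := u r)"])
       (auto simp: fun_eq_iff PiE_iff extensional_def vecs_def)
  finally show ?thesis by simp
qed

lemma sum_PiE_vecs_Suc_Suc:
  assumes "finite I"
  shows "(\<Sum>xs\<in>PiE I (\<lambda>_. vecs (Suc (Suc n))). F xs)
     = (\<Sum>ys\<in>PiE I (\<lambda>_. vecs n). \<Sum>u\<in>PiE I (\<lambda>_. UNIV). \<Sum>v\<in>PiE I (\<lambda>_. UNIV).
          F (\<lambda>r\<in>I. (ys r)(n := u r, Suc n := v r)))"
  by (simp add: sum_PiE_vecs_Suc[OF assms] cong: restrict_cong)

lemma sum_PiE_vecs_pairs:
  fixes g :: "(nat \<Rightarrow> 'a::zero) \<Rightarrow> (nat \<Rightarrow> 'a) \<Rightarrow> 'c::comm_semiring_1"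
  assumes fin: "finite I"
  shows "(\<Sum>xs\<in>PiE I (\<lambda>_. vecs (2*k)). \<Prod>j<k. g (\<lambda>r\<in>I. xs r (2*j)) (\<lambda>r\<in>I. xs r (2*j+1)))
       = (\<Sum>u\<in>PiE I (\<lambda>_. UNIV). \<Sum>v\<in>PiE I (\<lambda>_. UNIV). g u v) ^ k"
proof (induction k)
  case 0
  have "PiE I (\<lambda>_. vecs 0 :: (nat \<Rightarrow> 'a) set) = {\<lambda>r\<in>I. \<lambda>_. 0}"
    by (auto simp: vecs_def PiE_eq_singleton fun_eq_iff)
  then show ?case by simp
next
  case (Suc k)
  let ?cols = "\<lambda>xs j. g (\<lambda>r\<in>I. xs r (2*j)) (\<lambda>r\<in>I. xs r (2*j+1))"
  have step: "(\<Prod>j<Suc k. ?cols (\<lambda>r\<in>I. (zs r)(2*k := u r, Suc (2*k) := v r)) j)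
      = (\<Prod>j<k. ?cols zs j) * g u v"
    if "u \<in> PiE I (\<lambda>_. UNIV)" "v \<in> PiE I (\<lambda>_. UNIV)" for zs :: "nat \<Rightarrow> nat \<Rightarrow> 'a" and u v
  proof -
    define xs where "xs = (\<lambda>r\<in>I. (zs r)(2*k := u r, Suc (2*k) := v r))"
    have col: "(\<lambda>r\<in>I. xs r j) = (if j = 2*k then u else if j = Suc (2*k) then v else (\<lambda>r\<in>I. zs r j))"
      for j
      using that by (auto simp: xs_def fun_eq_iff PiE_iff extensional_def)
    have parity: "2 * j \<noteq> Suc (2 * k)" "Suc (2 * j) \<noteq> 2 * k" for j by presburger+
    have "(\<Prod>j<k. ?cols xs j) = (\<Prod>j<k. ?cols zs j)"
      by (intro prod.cong refl) (simp add: col parity)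
    then show ?thesis
      unfolding xs_def[symmetric] by (simp add: col parity)
  qed
  have "2 * Suc k = Suc (Suc (2*k))" by simp
  then have "(\<Sum>xs\<in>PiE I (\<lambda>_. vecs (2 * Suc k)). \<Prod>j<Suc k. ?cols xs j)
      = (\<Sum>zs\<in>PiE I (\<lambda>_. vecs (2*k)). \<Sum>u\<in>PiE I (\<lambda>_. UNIV). \<Sum>v\<in>PiE I (\<lambda>_. UNIV).
          (\<Prod>j<k. ?cols zs j) * g u v)"
    by (simp only: sum_PiE_vecs_Suc_Suc[OF fin]) (intro sum.cong refl step)
  also have "\<dots> = (\<Sum>zs\<in>PiE I (\<lambda>_. vecs (2*k)). \<Prod>j<k. ?cols zs j)
       * (\<Sum>u\<in>PiE I (\<lambda>_. UNIV). \<Sum>v\<in>PiE I (\<lambda>_. UNIV). g u v)"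
    by (simp only: sum_distrib_left[symmetric] sum_distrib_right[symmetric])
  finally show ?case
    by (simp only: Suc.IH power_Suc2)
qed

lemma sum_PiE_lessThan_1:
  fixes h :: "'b \<Rightarrow> 'c::comm_semiring_1"
  assumes "finite S"
  shows "(\<Sum>xs\<in>PiE {..<1::nat} (\<lambda>_. S). h (xs 0)) = (\<Sum>y\<in>S. h y)"
  using prod_sum_PiE[of "{..<1::nat}" "\<lambda>_. S" "\<lambda>_. h"] assms by simp

lemma sum_PiE_insert:
  assumes "i \<notin> I"
  shows "(\<Sum>g\<in>PiE (insert i I) T. F g) = (\<Sum>y\<in>T i. \<Sum>g\<in>PiE I T. F (g(i := y)))"
proof -
  have "(\<Sum>g\<in>PiE (insert i I) T. F g) = (\<Sum>(y, g)\<in>T i \<times> PiE I T. F (g(i := y)))"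
    using sum.reindex[OF inj_combinator[OF assms], of F] by (simp add: PiE_insert_eq o_def case_prod_unfold)
  then show ?thesis by (simp add: sum.cartesian_product)
qed

lemma sum_PiE_lessThan_3:
  "(\<Sum>xs\<in>PiE {..<3::nat} (\<lambda>_. S). G (xs 0) (xs 1) (xs 2)) = (\<Sum>x\<in>S. \<Sum>y\<in>S. \<Sum>z\<in>S. G x y z)"
proof -
  have "{..<3::nat} = insert 0 (insert 1 (insert 2 {}))" by auto
  then show ?thesis by (simp add: sum_PiE_insert)
qed

section \<open>The hyperbolic quadratic form\<close>

definition hyperbolic_form :: "nat \<Rightarrow> (nat \<Rightarrow> 'a::comm_ring) \<Rightarrow> 'a" where
  "hyperbolic_form k y = (\<Sum>j<k. y (2*j) * y (2*j+1))"

definition hyperbolic_zeros :: "nat \<Rightarrow> (nat \<Rightarrow> 'a::comm_ring) set" where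
  "hyperbolic_zeros k = {y \<in> vecs (2*k). hyperbolic_form k y = 0}"

lemma hyperbolic_zeros_subset_vecs: "hyperbolic_zeros k \<subseteq> vecs (2*k)"
  by (auto simp: hyperbolic_zeros_def)

text \<open>The matrix \<open>\<Sum>\<^sub>i a\<^sub>i \<Gamma>\<^sup>(\<^sup>i\<^sup>)\<close>; \<open>quad_forms_dependent\<close> says it vanishes for some \<open>a \<noteq> 0\<close>.\<close>
definition gamma_comb :: "nat \<Rightarrow> (nat \<Rightarrow> nat \<Rightarrow> 'a::comm_ring) \<Rightarrow> (nat \<Rightarrow> 'a) \<Rightarrow> nat \<Rightarrow> nat \<Rightarrow> 'a" where
  "gamma_comb m gam a r s = (\<Sum>i<m. a i * (gam i r * gam i s))"

lemma hyperbolic_form_linform_comb: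
  "(\<Sum>i<m. a i * hyperbolic_form k (linform D gam i xs))
   = (\<Sum>j<k. bilinear_form {..<D} (gamma_comb m gam a) (\<lambda>r\<in>{..<D}. xs r (2*j)) (\<lambda>r\<in>{..<D}. xs r (2*j+1)))"
proof -
  have expand: "hyperbolic_form k (linform D gam i xs)
      = (\<Sum>j<k. \<Sum>r<D. \<Sum>s<D. gam i r * gam i s * (xs r (2*j) * xs s (2*j+1)))" for i
    by (simp add: hyperbolic_form_def linform_def sum_product mult_ac)
  have "(\<Sum>i<m. a i * hyperbolic_form k (linform D gam i xs))
      = (\<Sum>i<m. \<Sum>j<k. \<Sum>r<D. \<Sum>s<D. a i * (gam i r * gam i s) * (xs r (2*j) * xs s (2*j+1)))"
    by (simp add: expand sum_distrib_left mult_ac)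
  also have "\<dots> = (\<Sum>j<k. \<Sum>r<D. \<Sum>s<D. \<Sum>i<m. a i * (gam i r * gam i s) * (xs r (2*j) * xs s (2*j+1)))"
    by (subst sum.swap) (simp add: sum.swap[of _ "{..<m}"])
  also have "\<dots> = (\<Sum>j<k. bilinear_form {..<D} (gamma_comb m gam a) (\<lambda>r\<in>{..<D}. xs r (2*j)) (\<lambda>r\<in>{..<D}. xs r (2*j+1)))"
    by (simp add: bilinear_form_def gamma_comb_def sum_distrib_left sum_distrib_right mult_ac)
  finally show ?thesis .
qed

lemma linform_in_vecs: "xs \<in> PiE {..<D} (\<lambda>_. vecs n) \<Longrightarrow> linform D gam i xs \<in> vecs n"
  by (auto simp: linform_def vecs_def PiE_def Pi_def)

lemma one_less_CARD_field: "1 < CARD('a::{field,finite})"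
  using card_mono[of UNIV "{0::'a, 1}"] by simp

context additive_character
begin

text \<open>Expanding each factor, the character of \<open>\<Sum>\<^sub>i a\<^sub>i Q(L\<^sub>i x)\<close> splits over the \<open>k\<close> hyperbolic pairs.\<close>
lemma sum_prod_character_hyperbolic:
  "(\<Sum>xs\<in>PiE {..<D} (\<lambda>_. vecs (2*k)). \<Prod>i<m. \<Sum>t\<in>UNIV. w i t * \<psi> (t * hyperbolic_form k (linform D gam i xs)))
   = (\<Sum>a\<in>PiE {..<m} (\<lambda>_. UNIV). (\<Prod>i<m. w i (a i))
        * of_nat (CARD('a) ^ D * card (left_kernel {..<D} (gamma_comb m gam a))) ^ k)"
proof -
  let ?B = "\<lambda>a. bilinear_form {..<D} (gamma_comb m gam a)"
  have "(\<Sum>xs\<in>PiE {..<D} (\<lambda>_. vecs (2*k)). \<Prod>i<m. \<Sum>t\<in>UNIV. w i t * \<psi> (t * hyperbolic_form k (linform D gam i xs)))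
     = (\<Sum>xs\<in>PiE {..<D} (\<lambda>_. vecs (2*k)). \<Sum>a\<in>PiE {..<m} (\<lambda>_. UNIV).
          \<Prod>i<m. w i (a i) * \<psi> (a i * hyperbolic_form k (linform D gam i xs)))"
    by (intro sum.cong refl prod_sum_PiE) auto
  also have "\<dots> = (\<Sum>a\<in>PiE {..<m} (\<lambda>_. UNIV). (\<Prod>i<m. w i (a i)) *
      (\<Sum>xs\<in>PiE {..<D} (\<lambda>_. vecs (2*k)).
         \<Prod>j<k. \<psi> (?B a (\<lambda>r\<in>{..<D}. xs r (2*j)) (\<lambda>r\<in>{..<D}. xs r (2*j+1)))))"
    by (subst sum.swap)
      (simp add: prod.distrib sum_distrib_left character_sum hyperbolic_form_linform_comb
        flip: character_sum)
  also have "\<dots> = (\<Sum>a\<in>PiE {..<m} (\<lambda>_. UNIV). (\<Prod>i<m. w i (a i)) *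
      (\<Sum>u\<in>PiE {..<D} (\<lambda>_. UNIV). \<Sum>v\<in>PiE {..<D} (\<lambda>_. UNIV). \<psi> (?B a u v)) ^ k)"
  proof (intro sum.cong refl arg_cong[where f = "\<lambda>z. _ * z"])
    fix a :: "nat \<Rightarrow> 'a"
    show "(\<Sum>xs\<in>PiE {..<D} (\<lambda>_. vecs (2*k)).
         \<Prod>j<k. \<psi> (?B a (\<lambda>r\<in>{..<D}. xs r (2*j)) (\<lambda>r\<in>{..<D}. xs r (2*j+1))))
      = (\<Sum>u\<in>PiE {..<D} (\<lambda>_. UNIV). \<Sum>v\<in>PiE {..<D} (\<lambda>_. UNIV). \<psi> (?B a u v)) ^ k"
      by (rule sum_PiE_vecs_pairs[where g = "\<lambda>u v. \<psi> (?B a u v)", OF finite_lessThan])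
  qed
  finally show ?thesis
    by (simp only: sum_character_bilinear_form[OF finite_lessThan] card_lessThan)
qed

lemma card_common_zeros:
  fixes gam :: "nat \<Rightarrow> nat \<Rightarrow> 'a"
  shows "CARD('a) ^ m * card {xs \<in> PiE {..<d} (\<lambda>_. vecs (2*k)). \<forall>i<m. hyperbolic_form k (linform d gam i xs) = 0}
   = (\<Sum>a\<in>PiE {..<m} (\<lambda>_. UNIV). (CARD('a) ^ d * card (left_kernel {..<d} (gamma_comb m gam a))) ^ k)"
proof -
  let ?X = "PiE {..<d} (\<lambda>_. vecs (2*k) :: (nat \<Rightarrow> 'a) set)"
  let ?P = "\<lambda>xs :: nat \<Rightarrow> nat \<Rightarrow> 'a. \<forall>i<m. hyperbolic_form k (linform d gam i xs) = 0"
  have orth: "(\<Sum>t\<in>UNIV. \<psi> (t * z)) = of_nat CARD('a) * of_bool (z = 0)" for z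
    using sum_character_mult[of z] by (simp add: mult.commute)
  have "(of_nat (CARD('a) ^ m * card {xs \<in> ?X. ?P xs}) :: complex)
      = (\<Sum>xs\<in>?X. of_nat CARD('a) ^ m * of_bool (?P xs))"
    by (simp add: sum_distrib_left Collect_conj_eq Int_commute finite_PiE)
  also have "\<dots> = (\<Sum>xs\<in>?X. \<Prod>i<m. \<Sum>t\<in>UNIV. 1 * \<psi> (t * hyperbolic_form k (linform d gam i xs)))"
    by (simp add: orth prod.distrib prod_of_bool Ball_def)
  also have "\<dots> = of_nat (\<Sum>a\<in>PiE {..<m} (\<lambda>_. UNIV). (CARD('a) ^ d * card (left_kernel {..<d} (gamma_comb m gam a))) ^ k)"
    using sum_prod_character_hyperbolic[where w = "\<lambda>_ _. 1" and D = d] by simp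
  finally show ?thesis by (simp only: of_nat_eq_iff)
qed

text \<open>The special case \<open>m = d = 1\<close>, \<open>L\<^sub>1(x) = x\<close> counts the zeros of the hyperbolic form itself.\<close>
lemma card_hyperbolic_zeros:
  "CARD('a) * card (hyperbolic_zeros k :: (nat \<Rightarrow> 'a) set)
   = CARD('a) ^ (2*k) + (CARD('a) - 1) * CARD('a) ^ k"
proof -
  define p where "p = CARD('a)"
  let ?one = "\<lambda>_ _. 1 :: 'a"
  have card_eq: "card (hyperbolic_zeros k :: (nat \<Rightarrow> 'a) set)
      = card {xs \<in> PiE {..<1} (\<lambda>_. vecs (2*k)). \<forall>i<1. hyperbolic_form k (linform 1 ?one i xs) = 0}"
    using sum_PiE_lessThan_1[of "vecs (2*k) :: (nat \<Rightarrow> 'a) set" "\<lambda>y. of_bool (hyperbolic_form k y = 0) :: nat"]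
    by (simp add: hyperbolic_zeros_def linform_def Collect_conj_eq Int_commute finite_PiE)
  have "p * card (hyperbolic_zeros k :: (nat \<Rightarrow> 'a) set)
      = (\<Sum>t\<in>UNIV. (p * card (left_kernel {..<1} (\<lambda>_ _. t :: 'a))) ^ k)"
  proof -
    have "gamma_comb 1 ?one a = (\<lambda>_ _. a 0)" for a
      by (simp add: fun_eq_iff gamma_comb_def)
    then show ?thesis
      using card_eq card_common_zeros[of 1 1 k ?one]
        sum_PiE_lessThan_1[of UNIV "\<lambda>t. (p * card (left_kernel {..<1} (\<lambda>_ _. t :: 'a))) ^ k"]
      by (simp add: p_def)
  qed
  also have "\<dots> = (\<Sum>t::'a\<in>UNIV. (p * (if t = 0 then p else 1)) ^ k)"
    by (simp only: card_left_kernel_1x1 p_def)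
  also have "\<dots> = (p * p) ^ k + (\<Sum>t\<in>UNIV - {0::'a}. p ^ k)"
  proof -
    have "(\<Sum>t\<in>UNIV - {0::'a}. (p * (if t = 0 then p else 1)) ^ k) = (\<Sum>t\<in>UNIV - {0::'a}. p ^ k)"
      by (rule sum.cong) auto
    then show ?thesis by (simp add: sum.remove[of UNIV 0])
  qed
  also have "\<dots> = p ^ (2*k) + (p - 1) * p ^ k"
    by (simp add: p_def card_Diff_singleton power_mult_distrib power_mult power2_eq_square)
  finally show ?thesis unfolding p_def .
qed

lemma hyperbolic_density:
  "real (card (hyperbolic_zeros k :: (nat \<Rightarrow> 'a) set)) / real (card (vecs (2*k) :: (nat \<Rightarrow> 'a) set))
   = 1 / CARD('a) + (CARD('a) - 1) / CARD('a) * (1 / CARD('a)) ^ k"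
proof -
  define p where "p = CARD('a)"
  have p: "real p > 0" "p \<ge> 1" by (simp_all add: p_def Suc_le_eq)
  have "real p * real (card (hyperbolic_zeros k :: (nat \<Rightarrow> 'a) set)) = real p ^ k * real p ^ k + (real p - 1) * real p ^ k"
    using arg_cong[OF card_hyperbolic_zeros[of k], of real] p(2)
    by (simp add: p_def of_nat_diff power_mult power2_eq_square power_mult_distrib)
  moreover have "real (card (vecs (2*k) :: (nat \<Rightarrow> 'a) set)) = real p ^ k * real p ^ k"
    by (simp add: card_vecs p_def power_mult power2_eq_square power_mult_distrib)
  ultimately show ?thesis
    using p by (simp add: field_simps p_def flip: p_def)
qed

lemma hyperbolic_density_tendsto:
  "(\<lambda>k. real (card (hyperbolic_zeros k :: (nat \<Rightarrow> 'a) set)) / real (card (vecs (2*k) :: (nat \<Rightarrow> 'a) set)))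
     \<longlonglongrightarrow> 1 / CARD('a)"
proof -
  have "(\<lambda>k. 1 / CARD('a) + (CARD('a) - 1) / CARD('a) * (1 / real CARD('a)) ^ k)
      \<longlonglongrightarrow> 1 / CARD('a) + (CARD('a) - 1) / CARD('a) * 0"
    using one_less_CARD_field[where 'a='a] by (intro tendsto_intros LIMSEQ_power_zero) simp_all
  then show ?thesis
    by (simp add: hyperbolic_density)
qed

end

section \<open>The \<open>U\<^sup>2\<close> norm of the balanced zero set\<close>

text \<open>\<open>L\<^sub>i(x, h\<^sub>1, h\<^sub>2) = x + \<omega>\<^sub>1 h\<^sub>1 + \<omega>\<^sub>2 h\<^sub>2\<close> for \<open>i = \<omega>\<^sub>1 + 2 \<omega>\<^sub>2\<close>: the vertices of the parallelogram counted by the \<open>U\<^sup>2\<close> norm.\<close>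
definition cube_forms :: "nat \<Rightarrow> nat \<Rightarrow> 'a::comm_ring_1" where
  "cube_forms i r = of_bool (r = 0 \<or> (r = 1 \<and> odd i) \<or> (r = 2 \<and> 2 \<le> i))"

lemma linform_cube_forms:
  fixes xs :: "nat \<Rightarrow> nat \<Rightarrow> 'a::comm_ring_1"
  shows "linform 3 cube_forms 0 xs = xs 0" "linform 3 cube_forms 1 xs = vadd (xs 0) (xs 1)"
    "linform 3 cube_forms 2 xs = vadd (xs 0) (xs 2)"
    "linform 3 cube_forms 3 xs = vadd (vadd (xs 0) (xs 1)) (xs 2)"
proof -
  have "{..<3::nat} = {0, 1, 2}" by auto
  then show "linform 3 cube_forms 0 xs = xs 0" "linform 3 cube_forms 1 xs = vadd (xs 0) (xs 1)"
    "linform 3 cube_forms 2 xs = vadd (xs 0) (xs 2)"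
    "linform 3 cube_forms 3 xs = vadd (vadd (xs 0) (xs 1)) (xs 2)"
    by (simp_all add: linform_def vadd_def cube_forms_def fun_eq_iff add_ac)
qed

lemma U2_pow4_eq_sum_cube_forms:
  fixes f :: "(nat \<Rightarrow> 'a::{finite,comm_ring_1}) \<Rightarrow> complex"
  assumes real: "\<And>x. cnj (f x) = f x"
  shows "U2_pow4 n f = (\<Sum>xs\<in>PiE {..<3} (\<lambda>_. vecs n). \<Prod>i<4. f (linform 3 cube_forms i xs))
                        / of_nat (card (vecs n :: (nat \<Rightarrow> 'a) set) ^ 3)"
proof -
  have "{..<4::nat} = {0, 1, 2, 3}" by auto
  then have four: "(\<Prod>i<4. g i) = g 0 * g 1 * g 2 * g 3" for g :: "nat \<Rightarrow> complex"
    by (simp add: mult_ac)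
  have "U2_pow4 n f = (\<Sum>xs\<in>PiE {..<3::nat} (\<lambda>_. vecs n).
      f (xs 0) * f (vadd (xs 0) (xs 1)) * f (vadd (xs 0) (xs 2)) * f (vadd (vadd (xs 0) (xs 1)) (xs 2)))
      / of_nat (card (vecs n :: (nat \<Rightarrow> 'a) set) ^ 3)"
    unfolding U2_pow4_def real sum_PiE_lessThan_3[where S = "vecs n"
        and G = "\<lambda>x h1 h2. f x * f (vadd x h1) * f (vadd x h2) * f (vadd (vadd x h1) h2)"] by (rule refl)
  then show ?thesis
    by (simp only: four linform_cube_forms)
qed

lemma gamma_comb_cube_forms_eq_0:
  fixes a :: "nat \<Rightarrow> 'a::field"
  assumes a: "a \<in> PiE {..<4} (\<lambda>_. UNIV)" and zero: "\<forall>r<3. \<forall>s<3. gamma_comb 4 cube_forms a r s = 0"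
  shows "a = (\<lambda>i\<in>{..<4}. 0)"
proof -
  have "{..<4::nat} = {0, 1, 2, 3}" by auto
  then have "a 3 = 0" "a 1 + a 3 = 0" "a 2 + a 3 = 0" "a 0 + a 1 + a 2 + a 3 = 0"
    using zero[rule_format, of 1 2] zero[rule_format, of 1 1] zero[rule_format, of 2 2] zero[rule_format, of 0 0]
    by (simp_all add: gamma_comb_def cube_forms_def add_ac)
  then have "a i = 0" if "i < 4" for i
    using that by (auto simp: less_Suc_eq numeral_eq_Suc)
  then show ?thesis
    using a by (auto simp: fun_eq_iff PiE_iff extensional_def)
qed

lemma card_left_kernel_cube_forms_le:
  fixes a :: "nat \<Rightarrow> 'a::{field,finite}"
  assumes "a \<in> PiE {..<4} (\<lambda>_. UNIV)" "a \<noteq> (\<lambda>i\<in>{..<4}. 0)"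
  shows "card (left_kernel {..<3} (gamma_comb 4 cube_forms a)) \<le> CARD('a) ^ 2"
proof -
  obtain r s where "r < 3" "s < 3" "gamma_comb 4 cube_forms a r s \<noteq> 0"
    using gamma_comb_cube_forms_eq_0 assms by blast
  then show ?thesis
    using card_left_kernel_le[of "{..<3}" r s] by simp
qed

lemma norm_cube_term_le:
  fixes a :: "nat \<Rightarrow> 'a::{field,finite}" and w :: "'a \<Rightarrow> complex"
  assumes a: "a \<in> PiE {..<4} (\<lambda>_. UNIV)" "a \<noteq> (\<lambda>i\<in>{..<4}. 0)"
    and w: "\<And>t. norm (w t) \<le> 1 / CARD('a)"
  shows "norm ((\<Prod>i<4. w (a i)) * of_nat (CARD('a) ^ 3 * card (left_kernel {..<3} (gamma_comb 4 cube_forms a))) ^ k)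
    \<le> (1 / CARD('a)) ^ 4 * (real CARD('a) ^ k) ^ 5"
proof -
  have "CARD('a) ^ 3 * card (left_kernel {..<3} (gamma_comb 4 cube_forms a)) \<le> CARD('a) ^ 3 * CARD('a) ^ 2"
    using card_left_kernel_cube_forms_le[OF a] by (rule mult_le_mono2)
  also have "\<dots> = CARD('a) ^ 5"
    by (simp flip: power_add)
  finally have "real (CARD('a) ^ 3 * card (left_kernel {..<3} (gamma_comb 4 cube_forms a))) \<le> real CARD('a) ^ 5"
    by (simp only: of_nat_le_iff flip: of_nat_power)
  then have K: "norm (of_nat (CARD('a) ^ 3 * card (left_kernel {..<3} (gamma_comb 4 cube_forms a))) ^ k :: complex)
      \<le> (real CARD('a) ^ k) ^ 5"
    unfolding norm_power norm_of_nat by (subst power_mult[symmetric], subst mult.commute, subst power_mult)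
      (rule power_mono, simp_all)
  have W: "norm (\<Prod>i<4. w (a i)) \<le> (1 / CARD('a)) ^ 4"
    using prod_mono[of "{..<4}" "\<lambda>i. norm (w (a i))" "\<lambda>_. 1 / CARD('a)"] w by (simp add: prod_norm)
  show ?thesis
    unfolding norm_mult by (rule mult_mono'[OF W K]) simp_all
qed

lemma norm_sum_le_single_plus:
  fixes X :: "'b \<Rightarrow> 'c::real_normed_vector"
  assumes "finite A" "a0 \<in> A" "\<And>a. a \<in> A \<Longrightarrow> a \<noteq> a0 \<Longrightarrow> norm (X a) \<le> B"
  shows "norm (sum X A) \<le> norm (X a0) + real (card A - 1) * B"
proof -
  have "norm (sum X A) \<le> norm (X a0) + norm (sum X (A - {a0}))"
    using assms(1,2) by (simp add: sum.remove norm_triangle_ineq)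
  also have "norm (sum X (A - {a0})) \<le> (\<Sum>a\<in>A - {a0}. norm (X a))"
    by (rule norm_sum)
  also have "\<dots> \<le> real (card A - 1) * B"
    using sum_bounded_above[of "A - {a0}" "\<lambda>a. norm (X a)" B] assms by (simp add: card_Diff_singleton)
  finally show ?thesis by simp
qed

lemma U2_norm_le:
  assumes "norm (U2_pow4 n f) \<le> \<delta> ^ 4" "0 \<le> \<delta>"
  shows "U2_norm n f \<le> \<delta>"
proof -
  have "Re (U2_pow4 n f) \<le> \<delta> ^ 4"
    using complex_Re_le_cmod assms(1) by (rule order_trans)
  then have "U2_norm n f \<le> root 4 (\<delta> ^ 4)"
    unfolding U2_norm_def by (rule real_root_le_mono[rotated]) simp
  also have "\<dots> = \<delta>"
    using assms(2) by (simp add: real_root_power_cancel)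
  finally show ?thesis .
qed

context additive_character
begin

lemma indicator_minus_expansion:
  "complex_of_real (of_bool (z = 0) - \<alpha>)
   = (\<Sum>t\<in>UNIV. complex_of_real (1 / CARD('a) - (if t = 0 then \<alpha> else 0)) * \<psi> (t * z))"
proof -
  have "(\<Sum>t\<in>UNIV. complex_of_real (1 / CARD('a) - (if t = 0 then \<alpha> else 0)) * \<psi> (t * z))
      = (\<Sum>t\<in>UNIV. of_real (1 / CARD('a)) * \<psi> (z * t) - (if t = 0 then of_real \<alpha> else 0))"
    by (intro sum.cong) (auto simp: algebra_simps)
  also have "\<dots> = of_real (1 / CARD('a)) * (\<Sum>t\<in>UNIV. \<psi> (z * t)) - of_real \<alpha>"
    by (simp add: sum_subtractf sum_distrib_left)
  also have "\<dots> = complex_of_real (of_bool (z = 0) - \<alpha>)"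
    by (simp add: sum_character_mult)
  finally show ?thesis ..
qed

lemma U2_pow4_balanced_hyperbolic_eq:
  fixes \<alpha> :: real and k :: nat
  defines "w \<equiv> \<lambda>t::'a. complex_of_real (1 / CARD('a) - (if t = 0 then \<alpha> else 0))"
  shows "U2_pow4 (2*k) (\<lambda>x. complex_of_real (indicator (hyperbolic_zeros k :: (nat \<Rightarrow> 'a) set) x - \<alpha>)) * of_nat (CARD('a) ^ (6*k))
    = (\<Sum>a\<in>PiE {..<4} (\<lambda>_. UNIV). (\<Prod>i<4. w (a i))
         * of_nat (CARD('a) ^ 3 * card (left_kernel {..<3} (gamma_comb 4 cube_forms a))) ^ k)"
proof -
  let ?f = "\<lambda>x. complex_of_real (indicator (hyperbolic_zeros k :: (nat \<Rightarrow> 'a) set) x - \<alpha>)"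
  have expansion: "?f y = (\<Sum>t\<in>UNIV. w t * \<psi> (t * hyperbolic_form k y))" if "y \<in> vecs (2*k)" for y
    using that indicator_minus_expansion[of "hyperbolic_form k y" \<alpha>] by (simp add: hyperbolic_zeros_def w_def indicator_def)
  have "card (vecs (2*k) :: (nat \<Rightarrow> 'a) set) ^ 3 = CARD('a) ^ (6*k)"
    by (simp add: card_vecs flip: power_mult)
  then have "U2_pow4 (2*k) ?f * of_nat (CARD('a) ^ (6*k))
      = (\<Sum>xs\<in>PiE {..<3} (\<lambda>_. vecs (2*k)). \<Prod>i<4. ?f (linform 3 cube_forms i xs))"
    by (simp add: U2_pow4_eq_sum_cube_forms)
  also have "\<dots> = (\<Sum>xs\<in>PiE {..<3} (\<lambda>_. vecs (2*k)).
      \<Prod>i<4. \<Sum>t\<in>UNIV. w t * \<psi> (t * hyperbolic_form k (linform 3 cube_forms i xs)))"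
    by (rule sum.cong[OF refl], rule prod.cong[OF refl], rule expansion, erule linform_in_vecs)
  finally show ?thesis
    by (simp add: sum_prod_character_hyperbolic[where w = "\<lambda>_. w"])
qed

lemma norm_U2_pow4_balanced_hyperbolic_le:
  fixes \<alpha> :: real and k :: nat
  assumes coeff_le: "\<bar>1 / CARD('a) - \<alpha>\<bar> \<le> 1 / CARD('a)"
  shows "norm (U2_pow4 (2*k) (\<lambda>x. complex_of_real (indicator (hyperbolic_zeros k :: (nat \<Rightarrow> 'a) set) x - \<alpha>)))
    \<le> \<bar>1 / CARD('a) - \<alpha>\<bar> ^ 4 + 1 / CARD('a) ^ k"
proof -
  define p where "p = CARD('a)"
  have p: "real p > 0" by (simp add: p_def)
  define w where "w = (\<lambda>t::'a. complex_of_real (1 / CARD('a) - (if t = 0 then \<alpha> else 0)))"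
  define X where "X a = (\<Prod>i<4. w (a i)) * of_nat (p ^ 3 * card (left_kernel {..<3} (gamma_comb 4 cube_forms a))) ^ k"
    for a :: "nat \<Rightarrow> 'a"
  define a0 where "a0 = (\<lambda>i\<in>{..<4::nat}. 0 :: 'a)"
  have norm_w: "norm (w t) \<le> 1 / p" for t
    unfolding w_def norm_of_real using coeff_le by (simp add: p_def)
  have X_a0: "norm (X a0) = \<bar>1 / p - \<alpha>\<bar> ^ 4 * (real p ^ k) ^ 6"
  proof -
    have "card (left_kernel {..<3} (gamma_comb 4 cube_forms a0)) = p ^ 3"
      by (simp add: card_left_kernel_zero a0_def gamma_comb_def p_def)
    moreover have "(\<Prod>i<4. w (a0 i)) = w 0 ^ 4"
      by (simp add: a0_def)
    moreover have "norm (w 0) = \<bar>1 / p - \<alpha>\<bar>"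
      unfolding w_def norm_of_real by (simp add: p_def)
    ultimately show ?thesis
      by (simp add: X_def norm_mult norm_power flip: power_mult power_add) (simp add: mult.commute power_mult)
  qed
  have X_le: "norm (X a) \<le> (1 / p) ^ 4 * (real p ^ k) ^ 5" if "a \<in> PiE {..<4} (\<lambda>_. UNIV)" "a \<noteq> a0" for a
    using norm_cube_term_le[of a w] that norm_w by (simp add: X_def a0_def p_def)
  have "norm (U2_pow4 (2*k) (\<lambda>x. complex_of_real (indicator (hyperbolic_zeros k :: (nat \<Rightarrow> 'a) set) x - \<alpha>))) * (real p ^ k) ^ 6
      = norm (U2_pow4 (2*k) (\<lambda>x. complex_of_real (indicator (hyperbolic_zeros k :: (nat \<Rightarrow> 'a) set) x - \<alpha>)) * of_nat (CARD('a) ^ (6*k)))"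
    by (simp add: norm_mult p_def norm_power mult.commute flip: power_mult)
  also have "\<dots> = norm (\<Sum>a\<in>PiE {..<4} (\<lambda>_. UNIV). X a)"
    unfolding U2_pow4_balanced_hyperbolic_eq X_def w_def p_def ..
  also have "\<dots> \<le> \<bar>1 / p - \<alpha>\<bar> ^ 4 * (real p ^ k) ^ 6 + real (p ^ 4 - 1) * ((1 / p) ^ 4 * (real p ^ k) ^ 5)"
    using norm_sum_le_single_plus[of "PiE {..<4} (\<lambda>_. UNIV)" a0 X] X_a0 X_le
    by (simp add: a0_def card_PiE p_def finite_PiE)
  also have "\<dots> \<le> (\<bar>1 / p - \<alpha>\<bar> ^ 4 + 1 / p ^ k) * (real p ^ k) ^ 6"
    using p by (simp add: field_simps eval_nat_numeral of_nat_diff)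
  finally show ?thesis
    using p by (simp add: p_def)
qed

lemma eventually_U2_norm_balanced_hyperbolic_le:
  assumes "\<delta> > 0"
  shows "eventually (\<lambda>k. U2_norm (2*k) (\<lambda>x. complex_of_real (indicator (hyperbolic_zeros k :: (nat \<Rightarrow> 'a) set) x
      - real (card (hyperbolic_zeros k :: (nat \<Rightarrow> 'a) set)) / real (card (vecs (2*k) :: (nat \<Rightarrow> 'a) set))))
      \<le> \<delta>) sequentially"
proof -
  define \<alpha> where "\<alpha> k = real (card (hyperbolic_zeros k :: (nat \<Rightarrow> 'a) set)) / real (card (vecs (2*k) :: (nat \<Rightarrow> 'a) set))"
    for k
  define \<beta> where "\<beta> k = \<bar>1 / CARD('a) - \<alpha> k\<bar>" for k
  have "\<beta> \<longlonglongrightarrow> \<bar>1 / CARD('a) - 1 / CARD('a)\<bar>"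
    unfolding \<beta>_def \<alpha>_def by (intro tendsto_intros hyperbolic_density_tendsto)
  then have \<beta>: "\<beta> \<longlonglongrightarrow> 0" by simp
  then have "eventually (\<lambda>k. \<beta> k < 1 / CARD('a)) sequentially"
    by (rule order_tendstoD) simp
  moreover have "(\<lambda>k. \<beta> k ^ 4 + (1 / real CARD('a)) ^ k) \<longlonglongrightarrow> 0 ^ 4 + 0"
    using one_less_CARD_field[where 'a='a] by (intro tendsto_intros \<beta> LIMSEQ_power_zero) simp_all
  then have "eventually (\<lambda>k. \<beta> k ^ 4 + (1 / real CARD('a)) ^ k < \<delta> ^ 4) sequentially"
    by (rule order_tendstoD) (use assms in simp)
  ultimately show ?thesis
  proof eventually_elim
    case (elim k)
    then have "norm (U2_pow4 (2*k) (\<lambda>x. complex_of_real (indicator (hyperbolic_zeros k :: (nat \<Rightarrow> 'a) set) x - \<alpha> k)))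
        \<le> \<delta> ^ 4"
      using norm_U2_pow4_balanced_hyperbolic_le[of "\<alpha> k" k] by (simp add: \<beta>_def power_one_over)
    then show ?case
      unfolding \<alpha>_def by (rule U2_norm_le) (use assms in simp)
  qed
qed

end

section \<open>Counting solutions\<close>

context additive_character
begin

text \<open>Each of the \<open>p\<close> combinations \<open>a\<close> on the line through the dependency contributes the maximal
  term \<open>p\<^sup>2\<^sup>d\<^sup>k\<close> to \<open>card_common_zeros\<close>.\<close>
lemma solution_density_ge:
  fixes gam :: "nat \<Rightarrow> nat \<Rightarrow> 'a"
  assumes "quad_forms_dependent m d gam"
  shows "real CARD('a) / real CARD('a) ^ m
    \<le> real (card {xs \<in> PiE {..<d} (\<lambda>_. vecs (2*k)). \<forall>i<m. linform d gam i xs \<in> hyperbolic_zeros k})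
       / real (card (vecs (2*k) :: (nat \<Rightarrow> 'a) set)) ^ d"
proof -
  define p where "p = CARD('a)"
  obtain c i0 where i0: "i0 < m" "c i0 \<noteq> 0" and c: "\<forall>r<d. \<forall>s<d. gamma_comb m gam c r s = 0"
    using assms by (auto simp: quad_forms_dependent_def gamma_comb_def)
  define T where "T = range (\<lambda>l::'a. \<lambda>i\<in>{..<m}. l * c i)"
  have T_sub: "T \<subseteq> PiE {..<m} (\<lambda>_. UNIV)"
    unfolding T_def by (intro image_subsetI, subst restrict_PiE_iff) simp
  have "inj (\<lambda>l::'a. \<lambda>i\<in>{..<m}. l * c i)"
    by (rule injI) (metis i0 lessThan_iff mult_right_cancel restrict_apply')
  then have card_T: "card T = p"
    by (simp add: T_def card_image p_def)
  have kernel_T: "card (left_kernel {..<d} (gamma_comb m gam a)) = p ^ d" if "a \<in> T" for a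
  proof -
    obtain l where "a = (\<lambda>i\<in>{..<m}. l * c i)" using \<open>a \<in> T\<close> by (auto simp: T_def)
    then have "gamma_comb m gam a r s = l * gamma_comb m gam c r s" for r s
      by (simp add: gamma_comb_def sum_distrib_left mult.assoc)
    then show ?thesis
      using c card_left_kernel_zero[of "{..<d}" "gamma_comb m gam a"] by (simp add: p_def)
  qed
  have "p * (p ^ d * p ^ d) ^ k = (\<Sum>a\<in>T. (p ^ d * card (left_kernel {..<d} (gamma_comb m gam a))) ^ k)"
    by (simp add: kernel_T card_T)
  also have "\<dots> \<le> (\<Sum>a\<in>PiE {..<m} (\<lambda>_. UNIV). (p ^ d * card (left_kernel {..<d} (gamma_comb m gam a))) ^ k)"
    using T_sub by (intro sum_mono2) (auto intro: finite_PiE)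
  also have "\<dots> = p ^ m * card {xs \<in> PiE {..<d} (\<lambda>_. vecs (2*k)). \<forall>i<m. linform d gam i xs \<in> hyperbolic_zeros k}"
    unfolding card_common_zeros[symmetric] p_def
    by (auto simp: hyperbolic_zeros_def linform_in_vecs intro!: arg_cong[where f = card])
  finally have "real (p * (p ^ d * p ^ d) ^ k)
      \<le> real (p ^ m * card {xs \<in> PiE {..<d} (\<lambda>_. vecs (2*k)). \<forall>i<m. linform d gam i xs \<in> hyperbolic_zeros k})"
    by (rule of_nat_mono)
  moreover have "real (card (vecs (2*k) :: (nat \<Rightarrow> 'a) set)) ^ d = (real p ^ d * real p ^ d) ^ k"
    by (simp add: card_vecs p_def mult_2 power_add flip: power_mult power_mult_distrib) (simp add: mult.commute)
  moreover have "0 < real p" by (simp add: p_def)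
  ultimately show ?thesis
    by (simp add: field_simps p_def)
qed

lemma eventually_solution_density_ge:
  fixes gam :: "nat \<Rightarrow> nat \<Rightarrow> 'a"
  assumes "quad_forms_dependent m d gam"
  shows "eventually (\<lambda>k.
    (real (card (hyperbolic_zeros k :: (nat \<Rightarrow> 'a) set)) / real (card (vecs (2*k) :: (nat \<Rightarrow> 'a) set))) ^ m
      + (real CARD('a) - 2) / real CARD('a) ^ m
    \<le> real (card {xs \<in> PiE {..<d} (\<lambda>_. vecs (2*k)). \<forall>i<m. linform d gam i xs \<in> hyperbolic_zeros k})
       / real (card (vecs (2*k) :: (nat \<Rightarrow> 'a) set)) ^ d) sequentially"
proof -
  have "(\<lambda>k. (real (card (hyperbolic_zeros k :: (nat \<Rightarrow> 'a) set)) / real (card (vecs (2*k) :: (nat \<Rightarrow> 'a) set))) ^ m)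
      \<longlonglongrightarrow> (1 / CARD('a)) ^ m"
    by (intro tendsto_power hyperbolic_density_tendsto)
  then have "eventually (\<lambda>k.
      (real (card (hyperbolic_zeros k :: (nat \<Rightarrow> 'a) set)) / real (card (vecs (2*k) :: (nat \<Rightarrow> 'a) set))) ^ m
      < 2 / real CARD('a) ^ m) sequentially"
    by (rule order_tendstoD) (simp add: power_one_over divide_strict_right_mono)
  then show ?thesis
  proof eventually_elim
    case (elim k)
    then show ?case
      using solution_density_ge[OF assms, of k] by (simp add: diff_divide_distrib)
  qed
qed

lemma exists_balanced_hyperbolic_witness:
  fixes gam :: "nat \<Rightarrow> nat \<Rightarrow> 'a"
  assumes "quad_forms_dependent m d gam" "\<delta> > 0"
  shows "\<exists>n. \<exists>A \<subseteq> (vecs n :: (nat \<Rightarrow> 'a) set).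
     (let \<alpha> = real (card A) / real (card (vecs n :: (nat \<Rightarrow> 'a) set)) in
       U2_norm n (\<lambda>x. complex_of_real (indicator A x - \<alpha>)) \<le> \<delta> \<and>
       real (card {xs \<in> PiE {..<d} (\<lambda>_. vecs n). \<forall>i<m. linform d gam i xs \<in> A})
         / real (card (vecs n :: (nat \<Rightarrow> 'a) set)) ^ d \<ge> \<alpha> ^ m + (real CARD('a) - 2) / real CARD('a) ^ m)"
  using eventually_happens'[OF sequentially_bot eventually_conj[OF
      eventually_U2_norm_balanced_hyperbolic_le[OF assms(2)] eventually_solution_density_ge[OF assms(1)]]]
    hyperbolic_zeros_subset_vecs
  unfolding Let_def by blast

end

theorem theorem3p1:
  fixes p m d :: nat and gam :: "nat \<Rightarrow> nat \<Rightarrow> 'a::{field,finite}"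
  assumes "prime p" and "odd p" and "CARD('a) = p"
    and "quad_forms_dependent m d gam"
  shows "\<exists>\<epsilon>>0. \<forall>\<delta>>0. \<exists>n. \<exists>A \<subseteq> (vecs n :: (nat \<Rightarrow> 'a) set).
     (let \<alpha> = real (card A) / real (card (vecs n :: (nat \<Rightarrow> 'a) set)) in
       U2_norm n (\<lambda>x. complex_of_real (indicator A x - \<alpha>)) \<le> \<delta> \<and>
       real (card {xs \<in> PiE {..<d} (\<lambda>_. vecs n). \<forall>i<m. linform d gam i xs \<in> A})
         / real (card (vecs n :: (nat \<Rightarrow> 'a) set)) ^ d \<ge> \<alpha> ^ m + \<epsilon>)"
proof -
  obtain \<psi> :: "'a \<Rightarrow> complex" where "additive_character \<psi>"
    using additive_character_exists assms(1,3) by blast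
  then interpret additive_character \<psi> .
  have "p \<noteq> 2" "p \<ge> 2" using assms(1,2) prime_ge_2_nat by auto
  then have "(real p - 2) / real p ^ m > 0" by simp
  then show ?thesis
    using exists_balanced_hyperbolic_witness[OF assms(4)] unfolding assms(3) by blast
qed

end
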